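(* Let $p$ be a prime, $\alpha\ge1$, $\beta\ge0$, and let $\delta\ge(\beta(p-1)+1)p^{\alpha-1}$ be an integer. Then $p^\beta$ divides $\binom{\delta}{x}_{p^\alpha}$ for every $x\in\mathbb{Z}_{p^\alpha}$.
   Context: For integers $d\ge0$, $q\ge1$ and a residue class $x\in\mathbb{Z}_q=\mathbb{Z}/q\mathbb{Z}$, $\binom{d}{x}_q:=\sum_{\hat x\in x,\ \hat x\ge0}(-1)^{\hat x}\binom{d}{\hat x}\in\mathbb{Z}$, the sum running over the nonnegative integer representatives $\hat x$ of $x$ (only $\hat x\le d$ give nonzero terms). *)

theory Defs
  imports Main "HOL-Computational_Algebra.Primes"
begin

text \<open>Alternating binomial sum over a residue class: for a class x in Z/qZ
  (represented by any integer x), sum over nonnegative representatives k of x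
  (only k \<le> d contribute) of (-1)^k * (d choose k).\<close>
definition binom_mod :: "nat \<Rightarrow> nat \<Rightarrow> int \<Rightarrow> int" where
  "binom_mod d q x = (\<Sum>k\<in>{k. k \<le> d \<and> int k mod int q = x mod int q}.
       (-1::int) ^ k * int (d choose k))"

end

theory Submission
  imports Defs "HOL-Computational_Algebra.Polynomial"
begin

text \<open>
  Put q = p^\<alpha>. The class sum binom_mod \<delta> q x is a linear functional of the coefficients
  of (1 - X)^\<delta> that vanishes on multiples of X^q - 1, so it suffices that (1 - X)^\<delta> lies
  in the ideal (p^\<beta>, X^q - 1) of \<int>[X]. This holds in any commutative ring for x with
  x^q \<equiv> 1: there h = x^(p^(\<alpha>-1)) satisfies h^p \<equiv> 1, and (-1)^k (p-1 choose k) \<equiv> 1 (mod p)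
  gives (1 - h)^(p-1) \<equiv> 1 + h + ... + h^(p-1) (mod p); multiplying by 1 - h shows that
  (1 - h)^p is p (1 - h) times something, hence (1 - h)^j is divisible by
  p^\<lfloor>(j-1)/(p-1)\<rfloor>. As (1 - x)^(p^(\<alpha>-1)) = (1 - h) + p a by Frobenius, every term in the
  binomial expansion of its (\<beta>(p-1) + 1)-th power is divisible by p^\<beta>.
\<close>

lemma prime_dvd_signed_choose_pred_minus_one:
  fixes p :: nat
  assumes "prime p" and "k \<le> p - 1"
  shows "int p dvd (-1) ^ k * int (p - 1 choose k) - 1"
  using assms(2)
proof (induction k)
  case 0
  then show ?case by simp
next
  case (Suc k)
  have "Suc (p - 1) = p"
    using prime_gt_0_nat[OF assms(1)] by simp
  then have pascal: "int (p - 1 choose Suc k) = int (p choose Suc k) - int (p - 1 choose k)"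
    using binomial_Suc_Suc[of "p - 1" k] by simp
  have "p dvd (p choose Suc k)"
    using Suc.prems assms(1) by (intro dvd_choose_prime) auto
  then have "int p dvd (-1) ^ Suc k * int (p choose Suc k)"
    by simp
  moreover have "(-1) ^ Suc k * int (p - 1 choose Suc k) - 1
      = (-1) ^ Suc k * int (p choose Suc k) + ((-1) ^ k * int (p - 1 choose k) - 1)"
    unfolding pascal by (simp add: algebra_simps)
  moreover have "int p dvd (-1) ^ k * int (p - 1 choose k) - 1"
    using Suc by simp
  ultimately show ?case
    by (metis dvd_add)
qed

lemma one_minus_power_pred_prime_cong:
  fixes y :: "'a::comm_ring_1"
  assumes "prime p"
  shows "of_nat p dvd (1 - y) ^ (p - 1) - (\<Sum>k<p. y ^ k)"
proof -
  have "(1 - y) ^ (p - 1) = (\<Sum>k\<le>p - 1. of_nat (p - 1 choose k) * (- y) ^ k * 1 ^ (p - 1 - k))"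
    using binomial_ring[of "- y" 1 "p - 1"] by simp
  also have "\<dots> = (\<Sum>k\<le>p - 1. of_int ((-1) ^ k * int (p - 1 choose k)) * y ^ k)"
  proof (intro sum.cong refl)
    fix k
    have "(- y) ^ k = (-1) ^ k * y ^ k"
      by (rule power_minus)
    then show "of_nat (p - 1 choose k) * (- y) ^ k * 1 ^ (p - 1 - k)
        = of_int ((-1) ^ k * int (p - 1 choose k)) * y ^ k"
      by (simp add: ac_simps)
  qed
  also have "{..p - 1} = {..<p}"
    using prime_gt_0_nat[OF assms] by auto
  finally have "(1 - y) ^ (p - 1) - (\<Sum>k<p. y ^ k)
      = (\<Sum>k<p. of_int ((-1) ^ k * int (p - 1 choose k)) * y ^ k - y ^ k)"
    by (simp add: sum_subtractf)
  also have "\<dots> = (\<Sum>k<p. of_int ((-1) ^ k * int (p - 1 choose k) - 1) * y ^ k)"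
    by (simp add: left_diff_distrib)
  also have "of_nat p dvd \<dots>"
  proof (intro dvd_sum dvd_mult2)
    fix k assume "k \<in> {..<p}"
    then have "int p dvd (-1) ^ k * int (p - 1 choose k) - 1"
      by (intro prime_dvd_signed_choose_pred_minus_one[OF assms]) auto
    then obtain c where "(-1) ^ k * int (p - 1 choose k) - 1 = int p * c"
      by (elim dvdE)
    then show "of_nat p dvd (of_int ((-1) ^ k * int (p - 1 choose k) - 1) :: 'a)"
      by simp
  qed
  finally show ?thesis .
qed

lemma one_minus_power_prime_cong:
  fixes y :: "'a::comm_ring_1"
  assumes "prime p"
  shows "of_nat p dvd (1 - y) ^ p - (1 - y ^ p)"
proof -
  have "Suc (p - 1) = p"
    using prime_gt_0_nat[OF assms] by simp
  then have "(1 - y) ^ p - (1 - y ^ p) = (1 - y) * ((1 - y) ^ (p - 1) - (\<Sum>k<p. y ^ k))"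
    using power_Suc[of "1 - y" "p - 1"] by (simp add: right_diff_distrib one_diff_power_eq)
  then show ?thesis
    using one_minus_power_pred_prime_cong[OF assms, of y] by simp
qed

lemma dvd_diff_trans:
  fixes a b c d :: "'a::comm_ring_1"
  assumes "d dvd a - b" and "d dvd b - c"
  shows "d dvd a - c"
  using dvd_add[OF assms] by simp

lemma dvd_power_diff_of_dvd_diff:
  fixes a b c :: "'a::comm_ring_1"
  assumes "c dvd a - b"
  shows "c dvd a ^ n - b ^ n"
  using assms dvd_trans power_diff_sumr2 by (metis dvd_triv_left)

lemma one_minus_power_prime_power_cong:
  fixes x :: "'a::comm_ring_1"
  assumes "prime p"
  shows "of_nat p dvd (1 - x) ^ (p ^ k) - (1 - x ^ (p ^ k))"
proof (induction k)
  case 0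
  then show ?case by simp
next
  case (Suc k)
  have "of_nat p dvd ((1 - x) ^ p ^ k) ^ p - (1 - x ^ p ^ k) ^ p"
    using Suc by (rule dvd_power_diff_of_dvd_diff)
  moreover have "of_nat p dvd (1 - x ^ p ^ k) ^ p - (1 - (x ^ p ^ k) ^ p)"
    using one_minus_power_prime_cong[OF assms] .
  ultimately have "of_nat p dvd ((1 - x) ^ p ^ k) ^ p - (1 - (x ^ p ^ k) ^ p)"
    by (rule dvd_diff_trans)
  moreover have "a ^ p ^ Suc k = (a ^ p ^ k) ^ p" for a :: 'a
    by (simp only: power_Suc2 power_mult)
  ultimately show ?case
    by simp
qed

lemma le_div_plus_diff:
  fixes a b c :: nat
  assumes "0 < c" and "a \<le> b * c"
  shows "b \<le> a div c + (b * c - a)"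
proof (cases "b \<le> a div c")
  case False
  then obtain d where d: "b = a div c + Suc d"
    by (metis add_Suc_right less_imp_Suc_add not_le)
  have "a < (a div c + 1) * c"
    using assms(1) by (simp add: dividend_less_div_times)
  then have "d * c < b * c - a"
    using d by (simp add: algebra_simps)
  moreover have "d \<le> d * c"
    using assms(1) by simp
  ultimately show ?thesis
    using d by linarith
qed simp

definition dvd_modulo :: "'a::comm_ring_1 \<Rightarrow> 'a \<Rightarrow> 'a \<Rightarrow> bool" where
  "dvd_modulo m a b \<longleftrightarrow> (\<exists>c. m dvd b - a * c)"

lemma dvd_modulo_add:
  assumes "dvd_modulo m a b" and "dvd_modulo m a b'"
  shows "dvd_modulo m a (b + b')"
proof -
  from assms obtain c c' where "m dvd b - a * c" and "m dvd b' - a * c'"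
    unfolding dvd_modulo_def by blast
  then have "m dvd (b + b') - a * (c + c')"
    using dvd_add by (fastforce simp: algebra_simps)
  then show ?thesis
    unfolding dvd_modulo_def by blast
qed

lemma dvd_modulo_sum:
  "(\<And>i. i \<in> I \<Longrightarrow> dvd_modulo m a (f i)) \<Longrightarrow> dvd_modulo m a (\<Sum>i\<in>I. f i)"
proof (induction I rule: infinite_finite_induct)
  case (insert i I)
  then show ?case
    by (simp add: dvd_modulo_add)
qed (simp_all add: dvd_modulo_def exI[of _ 0])

lemma dvd_modulo_mult:
  assumes "dvd_modulo m a b" and "dvd_modulo m a' b'"
  shows "dvd_modulo m (a * a') (b * b')"
proof -
  from assms obtain c c' where "m dvd b - a * c" and "m dvd b' - a' * c'"
    unfolding dvd_modulo_def by blast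
  then have "m dvd (b - a * c) * b' + a * c * (b' - a' * c')"
    by (simp add: dvd_add)
  then have "m dvd b * b' - a * a' * (c * c')"
    by (simp add: algebra_simps)
  then show ?thesis
    unfolding dvd_modulo_def by blast
qed

lemma dvd_imp_dvd_modulo: "a dvd b \<Longrightarrow> dvd_modulo m a b"
  unfolding dvd_modulo_def by (metis dvdE diff_self dvd_0_right)

lemma dvd_modulo_mult_right: "dvd_modulo m a b \<Longrightarrow> dvd_modulo m a (b * c)"
  using dvd_modulo_mult[of m a b 1 c] by (simp add: dvd_imp_dvd_modulo)

lemma dvd_modulo_mult_left: "dvd_modulo m a b \<Longrightarrow> dvd_modulo m a (c * b)"
  using dvd_modulo_mult_right by (simp add: mult.commute)

lemma dvd_modulo_dvd_trans: "a dvd a' \<Longrightarrow> dvd_modulo m a' b \<Longrightarrow> dvd_modulo m a b"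
  unfolding dvd_modulo_def by (metis dvdE mult.assoc)

lemma one_minus_root_of_unity_power_cong:
  fixes h m :: "'a::comm_ring_1"
  assumes "prime p" and "m dvd h ^ p - 1"
  obtains e where "\<And>t. m dvd (1 - h) ^ (1 + t * (p - 1)) - (of_nat p * e) ^ t * (1 - h)"
proof -
  obtain e where e: "(1 - h) ^ (p - 1) - (\<Sum>k<p. h ^ k) = of_nat p * e"
    using one_minus_power_pred_prime_cong[OF assms(1), of h] by (elim dvdE)
  have p: "Suc (p - 1) = p"
    using prime_gt_0_nat[OF assms(1)] by simp
  have "(1 - h) ^ p - of_nat p * e * (1 - h) = (1 - h) * (\<Sum>k<p. h ^ k)"
    unfolding e[symmetric] using power_Suc[of "1 - h" "p - 1"] p by (simp add: algebra_simps)
  also have "\<dots> = - (h ^ p - 1)"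
    by (simp add: one_diff_power_eq)
  finally have base: "m dvd (1 - h) ^ p - of_nat p * e * (1 - h)"
    using assms(2) by (simp only: dvd_minus_iff)
  have "m dvd (1 - h) ^ (1 + t * (p - 1)) - (of_nat p * e) ^ t * (1 - h)" for t
  proof (induction t)
    case (Suc t)
    have "1 + Suc t * (p - 1) = t * (p - 1) + p"
      using p by simp
    then have "(1 - h) ^ (1 + Suc t * (p - 1)) - of_nat p * e * (1 - h) ^ (1 + t * (p - 1))
        = (1 - h) ^ (t * (p - 1)) * ((1 - h) ^ p - of_nat p * e * (1 - h))"
      by (simp add: power_add algebra_simps)
    then have "m dvd (1 - h) ^ (1 + Suc t * (p - 1)) - of_nat p * e * (1 - h) ^ (1 + t * (p - 1))"
      using base by simp
    moreover have "m dvd of_nat p * e * (1 - h) ^ (1 + t * (p - 1)) - (of_nat p * e) ^ Suc t * (1 - h)"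
      using dvd_mult[OF Suc, of "of_nat p * e"] by (simp add: algebra_simps)
    ultimately show ?case
      by (rule dvd_diff_trans)
  qed simp
  then show thesis
    by (rule that)
qed

lemma dvd_modulo_one_minus_root_of_unity_power:
  fixes h m :: "'a::comm_ring_1"
  assumes "prime p" and "m dvd h ^ p - 1" and "1 \<le> j"
  shows "dvd_modulo m (of_nat p ^ ((j - 1) div (p - 1))) ((1 - h) ^ j)"
proof -
  define s where "s = (j - 1) div (p - 1)"
  obtain e where "m dvd (1 - h) ^ (1 + s * (p - 1)) - (of_nat p * e) ^ s * (1 - h)"
    using one_minus_root_of_unity_power_cong[OF assms(1,2)] by blast
  then have "dvd_modulo m (of_nat p ^ s) ((1 - h) ^ (1 + s * (p - 1)))"
    unfolding dvd_modulo_def by (metis mult.assoc power_mult_distrib)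
  then have "dvd_modulo m (of_nat p ^ s) ((1 - h) ^ (1 + s * (p - 1)) * (1 - h) ^ ((j - 1) mod (p - 1)))"
    by (rule dvd_modulo_mult_right)
  moreover have "1 + s * (p - 1) + (j - 1) mod (p - 1) = j"
    unfolding s_def using assms(3) div_mult_mod_eq[of "j - 1" "p - 1"] by linarith
  ultimately show ?thesis
    unfolding s_def by (metis power_add)
qed

lemma dvd_modulo_one_minus_power:
  fixes x m :: "'a::comm_ring_1"
  assumes "prime p" and "1 \<le> \<alpha>" and "m dvd x ^ p ^ \<alpha> - 1"
    and "(\<beta> * (p - 1) + 1) * p ^ (\<alpha> - 1) \<le> \<delta>"
  shows "dvd_modulo m (of_nat p ^ \<beta>) ((1 - x) ^ \<delta>)"
proof -
  define q where "q = p ^ (\<alpha> - 1)"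
  define h where "h = x ^ q"
  define n where "n = \<beta> * (p - 1) + 1"
  have p: "0 < p - 1"
    using prime_ge_2_nat[OF assms(1)] by simp
  have "h ^ p = x ^ p ^ \<alpha>"
    unfolding h_def q_def using assms(2) by (simp add: power_mult[symmetric] power_Suc2[symmetric])
  then have root: "m dvd h ^ p - 1"
    using assms(3) by simp
  obtain a where a: "(1 - x) ^ q - (1 - h) = of_nat p * a"
    using one_minus_power_prime_power_cong[OF assms(1), of x "\<alpha> - 1"]
    unfolding q_def h_def by (elim dvdE)
  have "(1 - x) ^ (q * n) = ((1 - h) + of_nat p * a) ^ n"
    by (simp add: power_mult a[symmetric])
  also have "\<dots> = (\<Sum>j\<le>n. of_nat (n choose j) * ((1 - h) ^ j * (of_nat p * a) ^ (n - j)))"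
    by (simp add: binomial_ring mult.assoc)
  finally have expand: "(1 - x) ^ (q * n) = \<dots>" .
  have "dvd_modulo m (of_nat p ^ \<beta>) ((1 - h) ^ j * (of_nat p * a) ^ (n - j))" if "j \<le> n" for j
  proof (cases "j = 0")
    case True
    have "\<beta> * 1 \<le> \<beta> * (p - 1)"
      using p by (intro mult_le_mono2) simp
    then have "\<beta> \<le> n"
      unfolding n_def by linarith
    then have "of_nat p ^ \<beta> dvd (of_nat p * a :: 'a) ^ n"
      by (simp add: power_mult_distrib le_imp_power_dvd dvd_mult2)
    then show ?thesis
      using True by (simp add: dvd_imp_dvd_modulo)
  next
    case False
    have "dvd_modulo m (of_nat p ^ ((j - 1) div (p - 1)) * of_nat p ^ (n - j))
        ((1 - h) ^ j * (of_nat p * a) ^ (n - j))"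
      using False by (intro dvd_modulo_mult dvd_modulo_one_minus_root_of_unity_power[OF assms(1) root]
          dvd_imp_dvd_modulo) (simp_all add: power_mult_distrib)
    moreover have "\<beta> \<le> (j - 1) div (p - 1) + (n - j)"
      using le_div_plus_diff[OF p, of "j - 1" \<beta>] False \<open>j \<le> n\<close> unfolding n_def by simp
    ultimately show ?thesis
      by (metis dvd_modulo_dvd_trans le_imp_power_dvd power_add)
  qed
  then have "dvd_modulo m (of_nat p ^ \<beta>) ((1 - x) ^ (q * n))"
    unfolding expand by (auto intro: dvd_modulo_sum dvd_modulo_mult_left)
  moreover have "q * n \<le> \<delta>"
    using assms(4) unfolding q_def n_def by (simp add: mult.commute)
  ultimately show ?thesis
    by (metis dvd_modulo_mult_right le_add_diff_inverse power_add)
qed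

definition coeff_class_sum :: "nat \<Rightarrow> nat \<Rightarrow> int \<Rightarrow> 'a::comm_ring_1 poly \<Rightarrow> 'a" where
  "coeff_class_sum N q r P = (\<Sum>k<N. if int k mod int q = r mod int q then coeff P k else 0)"

lemma coeff_class_sum_add:
  "coeff_class_sum N q r (P + Q) = coeff_class_sum N q r P + coeff_class_sum N q r Q"
  unfolding coeff_class_sum_def sum.distrib[symmetric] by (intro sum.cong refl) simp

lemma coeff_class_sum_smult: "c dvd coeff_class_sum N q r (smult c P)"
  unfolding coeff_class_sum_def by (auto intro: dvd_sum)

lemma coeff_class_sum_monom_mult:
  "coeff_class_sum (q + N) q r (monom 1 q * P) = coeff_class_sum N q r P"
proof (induction N)
  case (Suc N)
  have "int (q + N) mod int q = int N mod int q"
    by simp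
  with Suc show ?case
    by (simp add: coeff_class_sum_def coeff_monom_mult)
qed (auto simp: coeff_class_sum_def coeff_monom_mult intro!: sum.neutral)

lemma coeff_class_sum_degree_less:
  assumes "degree P < N" and "N \<le> N'"
  shows "coeff_class_sum N' q r P = coeff_class_sum N q r P"
  unfolding coeff_class_sum_def
  by (rule sum.mono_neutral_right) (use assms in \<open>auto intro!: coeff_eq_0\<close>)

lemma coeff_class_sum_X_power_minus_one_mult:
  assumes "degree P < N"
  shows "coeff_class_sum (q + N) q r ((monom 1 q - 1) * P) = 0"
proof -
  have "coeff_class_sum (q + N) q r ((monom 1 q - 1) * P)
      = coeff_class_sum (q + N) q r (monom 1 q * P) - coeff_class_sum (q + N) q r P"
    using coeff_class_sum_add[of "q + N" q r "(monom 1 q - 1) * P" P] by (simp add: algebra_simps)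
  then show ?thesis
    using coeff_class_sum_degree_less[OF assms, of "q + N"] by (simp add: coeff_class_sum_monom_mult)
qed

lemma coeff_class_sum_one_minus_X_power:
  assumes "d < N"
  shows "coeff_class_sum N q r ([:1, -1:] ^ d) = binom_mod d q r"
proof -
  have coeff: "coeff ([:1, -1:] ^ d) k = (if k \<le> d then (-1) ^ k * int (d choose k) else 0)" for k
  proof (cases "k \<le> d")
    case False
    moreover have "degree ([:1, -1:] ^ d :: int poly) \<le> d"
      using degree_power_le[of "[:1, -1:]" d] by simp
    ultimately show ?thesis
      by (simp add: coeff_eq_0)
  qed (simp add: coeff_linear_poly_power)
  have "coeff_class_sum N q r ([:1, -1:] ^ d)
      = (\<Sum>k\<in>{..<N} \<inter> {k. k \<le> d \<and> int k mod int q = r mod int q}. (-1) ^ k * int (d choose k))"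
    unfolding coeff_class_sum_def coeff by (subst sum.inter_restrict) (auto intro!: sum.cong)
  also have "{..<N} \<inter> {k. k \<le> d \<and> int k mod int q = r mod int q} = {k. k \<le> d \<and> int k mod int q = r mod int q}"
    using assms by auto
  finally show ?thesis
    unfolding binom_mod_def .
qed

lemma dvd_binom_mod_of_dvd_modulo:
  assumes "dvd_modulo (monom 1 q - 1) [:c:] ([:1, -1:] ^ d)"
  shows "c dvd binom_mod d q r"
proof -
  obtain A B where "[:1, -1:] ^ d - [:c:] * A = (monom 1 q - 1) * B"
    using assms unfolding dvd_modulo_def by (metis dvdE)
  then have AB: "[:1, -1:] ^ d = smult c A + (monom 1 q - 1) * B"
    by (simp add: diff_eq_eq)
  define N where "N = Suc (max d (degree B))"
  have "binom_mod d q r = coeff_class_sum (q + N) q r ([:1, -1:] ^ d)"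
    by (simp add: N_def coeff_class_sum_one_minus_X_power)
  also have "\<dots> = coeff_class_sum (q + N) q r (smult c A)"
    unfolding AB coeff_class_sum_add
    using coeff_class_sum_X_power_minus_one_mult[of B N q r] by (simp add: N_def)
  finally show ?thesis
    by (simp add: coeff_class_sum_smult)
qed

theorem corollary3p5:
  fixes p \<alpha> \<beta> \<delta> :: nat and x :: int
  assumes "prime p" and "\<alpha> \<ge> 1"
    and "\<delta> \<ge> (\<beta> * (p - 1) + 1) * p ^ (\<alpha> - 1)"
  shows "(int p) ^ \<beta> dvd binom_mod \<delta> (p ^ \<alpha>) x"
proof (rule dvd_binom_mod_of_dvd_modulo)
  have "dvd_modulo (monom 1 (p ^ \<alpha>) - 1) (of_nat p ^ \<beta>) ((1 - [:0, 1:]) ^ \<delta> :: int poly)"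
    using assms by (intro dvd_modulo_one_minus_power) (simp_all add: monom_altdef)
  moreover have "(of_nat p ^ \<beta> :: int poly) = [:int p ^ \<beta>:]"
    by (simp add: of_nat_poly poly_const_pow)
  moreover have "1 - [:0, 1:] = [:1, -1 :: int:]"
    by (simp add: one_pCons)
  ultimately show "dvd_modulo (monom 1 (p ^ \<alpha>) - 1) [:int p ^ \<beta>:] ([:1, -1:] ^ \<delta>)"
    by simp
qed

end
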